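(* Let $X,Y,Z$ be topological spaces, $f:X\times Y\to Z$ a mapping, and $V\subset Y$ a nonempty open set. Suppose that one of the following holds: (i) $f$ is vertically quasicontinuous at every point of $X\times V$, and for each $x\in X$ there is a dense subset $D_x$ of the space $V$ such that $f$ is lower $X$-quasicontinuous at every point of $\{x\}\times D_x$; (ii) $f$ is lower $Y$-quasicontinuous at every point of $X\times V$, and there is a dense subset $D$ of the space $V$ such that $f$ is lower $X$-quasicontinuous at every point of $X\times D$. Then the set-valued mapping $F^V:X\ni x\mapsto f_x(V)\in 2^Z$ is lower quasicontinuous.
   Context: $f_x(y)=f(x,y)$; $2^Z$ is the set of nonempty subsets of $Z$. A set-valued mapping $F:X\to 2^Z$ is lower quasicontinuous if for each $x_0\in X$, each neighborhood $U$ of $x_0$ and each open $W\subset Z$ with $F(x_0)\cap W\neq\emptyset$, there is an open $O\subset X$ with $\emptyset\ne O\subset U$ and $F(x)\cap W\neq\emptyset$ for every $x\in O$. The mapping $f$ is lower $X$-quasicontinuous (lower quasicontinuous with respect to the variable $x$) at $(a,b)$ if for each neighborhood $U$ of $a$ in $X$, each neighborhood $V'$ of $b$ in $Y$, and each neighborhood $W$ of $f(a,b)$ in $Z$, there is an open $O\subset X$ with $\emptyset\neq O\subset U$ and $f(\{x\}\times V')\cap W\neq\emptyset$ for every $x\in O$. Symmetrically, $f$ is lower $Y$-quasicontinuous at $(a,b)$ if for all such $U,V',W$ there is an open $O\subset Y$ with $\emptyset\ne O\subset V'$ and $f(U\times\{y\})\cap W\neq\emptyset$ for every $y\in O$. The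 mapping $f$ is vertically quasicontinuous at $(a,b)$ if for all such $U,V',W$ there are a point $x\in U$ and an open $O\subset Y$ with $\emptyset\neq O\subset V'$ and $f(\{x\}\times O)\subset W$. *)

theory Defs
  imports "HOL-Analysis.Analysis"
begin

definition nhd :: "'a::topological_space set \<Rightarrow> 'a \<Rightarrow> bool" where
  "nhd U a \<longleftrightarrow> (\<exists>S. open S \<and> a \<in> S \<and> S \<subseteq> U)"

definition lower_quasicont_sv :: "('a::topological_space \<Rightarrow> 'c::topological_space set) \<Rightarrow> bool" where
  "lower_quasicont_sv F \<longleftrightarrow> (\<forall>x0 U W. nhd U x0 \<longrightarrow> open W \<longrightarrow> F x0 \<inter> W \<noteq> {} \<longrightarrow>
      (\<exists>G. open G \<and> G \<noteq> {} \<and> G \<subseteq> U \<and> (\<forall>x\<in>G. F x \<inter> W \<noteq> {})))"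

definition lower_X_quasicont_at ::
  "('a::topological_space \<Rightarrow> 'b::topological_space \<Rightarrow> 'c::topological_space) \<Rightarrow> 'a \<Rightarrow> 'b \<Rightarrow> bool" where
  "lower_X_quasicont_at f a b \<longleftrightarrow> (\<forall>U V' W. nhd U a \<longrightarrow> nhd V' b \<longrightarrow> nhd W (f a b) \<longrightarrow>
      (\<exists>G. open G \<and> G \<noteq> {} \<and> G \<subseteq> U \<and> (\<forall>x\<in>G. (\<lambda>y. f x y) ` V' \<inter> W \<noteq> {})))"

definition lower_Y_quasicont_at ::
  "('a::topological_space \<Rightarrow> 'b::topological_space \<Rightarrow> 'c::topological_space) \<Rightarrow> 'a \<Rightarrow> 'b \<Rightarrow> bool" where
  "lower_Y_quasicont_at f a b \<longleftrightarrow> (\<forall>U V' W. nhd U a \<longrightarrow> nhd V' b \<longrightarrow> nhd W (f a b) \<longrightarrow>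
      (\<exists>G. open G \<and> G \<noteq> {} \<and> G \<subseteq> V' \<and> (\<forall>y\<in>G. (\<lambda>x. f x y) ` U \<inter> W \<noteq> {})))"

definition vert_quasicont_at ::
  "('a::topological_space \<Rightarrow> 'b::topological_space \<Rightarrow> 'c::topological_space) \<Rightarrow> 'a \<Rightarrow> 'b \<Rightarrow> bool" where
  "vert_quasicont_at f a b \<longleftrightarrow> (\<forall>U V' W. nhd U a \<longrightarrow> nhd V' b \<longrightarrow> nhd W (f a b) \<longrightarrow>
      (\<exists>x\<in>U. \<exists>G. open G \<and> G \<noteq> {} \<and> G \<subseteq> V' \<and> (\<lambda>y. f x y) ` G \<subseteq> W))"

definition dense_in :: "'b::topological_space set \<Rightarrow> 'b set \<Rightarrow> bool" where
  "dense_in D V \<longleftrightarrow> D \<subseteq> V \<and> V \<subseteq> closure D"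

end

theory Submission
  imports Defs
begin

(*
  Fix x0, a neighbourhood U of x0 (shrunk to an open S) and an open W
  meeting f_x0(V), say f(x0,y0) \<in> W with y0 \<in> V.  It suffices to find a point
  (x1,y1) \<in> S \<times> V with f(x1,y1) \<in> W at which f is lower X-quasicontinuous:
  applied to the neighbourhoods S, V, W, that property yields directly a nonempty
  open G \<subseteq> S on which every f_x(V) meets W (lemma lower_quasicont_sv_image_if_approx).
  Such an approximating point is produced from (x0,y0) in two ways:
  (i)  vertical quasicontinuity gives x1 \<in> S and a nonempty open N \<subseteq> V with
       f(x1,N) \<subseteq> W; density of D_x1 picks y1 \<in> N \<inter> D_x1;
  (ii) lower Y-quasicontinuity gives a nonempty open N \<subseteq> V each point of which
       has some f(x,y) \<in> W with x \<in> S; density of D picks y1 \<in> N \<inter> D.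
*)

lemma nhd_open: "open S \<Longrightarrow> a \<in> S \<Longrightarrow> nhd S a"
  unfolding nhd_def by blast

lemma dense_in_meets_open:
  assumes "dense_in D V" "open N" "N \<noteq> {}" "N \<subseteq> V"
  obtains y where "y \<in> N" "y \<in> D"
proof -
  have "N \<inter> closure D \<noteq> {}" using assms unfolding dense_in_def by blast
  then have "N \<inter> D \<noteq> {}" using open_Int_closure_eq_empty[OF assms(2)] by blast
  then show ?thesis using that by blast
qed

lemma lower_quasicont_sv_image_if_approx:
  fixes f :: "'a::topological_space \<Rightarrow> 'b::topological_space \<Rightarrow> 'c::topological_space"
  assumes "open V"
    and approx: "\<And>x0 y0 S W. open S \<Longrightarrow> x0 \<in> S \<Longrightarrow> open W \<Longrightarrow> y0 \<in> V \<Longrightarrow> f x0 y0 \<in> W \<Longrightarrow>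
           \<exists>x1\<in>S. \<exists>y1\<in>V. f x1 y1 \<in> W \<and> lower_X_quasicont_at f x1 y1"
  shows "lower_quasicont_sv (\<lambda>x. (\<lambda>y. f x y) ` V)"
  unfolding lower_quasicont_sv_def
proof (intro allI impI)
  fix x0 U W
  assume "nhd U x0" and W: "open W" and "(\<lambda>y. f x0 y) ` V \<inter> W \<noteq> {}"
  then obtain S y0 where S: "open S" "x0 \<in> S" "S \<subseteq> U" and y0: "y0 \<in> V" "f x0 y0 \<in> W"
    unfolding nhd_def by blast
  then obtain x1 y1 where x1: "x1 \<in> S" and y1: "y1 \<in> V" "f x1 y1 \<in> W"
      and lqc: "lower_X_quasicont_at f x1 y1"
    using approx W by blast
  obtain G where "open G" "G \<noteq> {}" "G \<subseteq> S" "\<forall>x\<in>G. (\<lambda>y. f x y) ` V \<inter> W \<noteq> {}"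
    using lqc[unfolded lower_X_quasicont_at_def, rule_format,
        OF nhd_open[OF S(1) x1] nhd_open[OF \<open>open V\<close> y1(1)] nhd_open[OF W y1(2)]]
    by blast
  then show "\<exists>G. open G \<and> G \<noteq> {} \<and> G \<subseteq> U \<and> (\<forall>x\<in>G. (\<lambda>y. f x y) ` V \<inter> W \<noteq> {})"
    using S(3) by blast
qed

lemma approx_from_vert_quasicont:
  assumes "open V" "open S" "x0 \<in> S" "open W" "y0 \<in> V" "f x0 y0 \<in> W"
    and vq: "vert_quasicont_at f x0 y0"
    and dense: "\<And>x. \<exists>D. dense_in D V \<and> (\<forall>y\<in>D. lower_X_quasicont_at f x y)"
  shows "\<exists>x1\<in>S. \<exists>y1\<in>V. f x1 y1 \<in> W \<and> lower_X_quasicont_at f x1 y1"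
proof -
  obtain x1 N where x1: "x1 \<in> S" and N: "open N" "N \<noteq> {}" "N \<subseteq> V"
      and fN: "(\<lambda>y. f x1 y) ` N \<subseteq> W"
    using vq[unfolded vert_quasicont_at_def, rule_format,
        OF nhd_open[OF assms(2,3)] nhd_open[OF assms(1,5)] nhd_open[OF assms(4,6)]]
    by blast
  obtain D where D: "dense_in D V" "\<forall>y\<in>D. lower_X_quasicont_at f x1 y"
    using dense by blast
  obtain y1 where "y1 \<in> N" "y1 \<in> D" using dense_in_meets_open[OF D(1) N] .
  then show ?thesis using x1 N(3) fN D(2) by blast
qed

lemma approx_from_lower_Y_quasicont:
  assumes "open V" "open S" "x0 \<in> S" "open W" "y0 \<in> V" "f x0 y0 \<in> W"
    and lyq: "lower_Y_quasicont_at f x0 y0"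
    and D: "dense_in D V" "\<And>x y. y \<in> D \<Longrightarrow> lower_X_quasicont_at f x y"
  shows "\<exists>x1\<in>S. \<exists>y1\<in>V. f x1 y1 \<in> W \<and> lower_X_quasicont_at f x1 y1"
proof -
  obtain N where N: "open N" "N \<noteq> {}" "N \<subseteq> V"
      and hits: "\<forall>y\<in>N. (\<lambda>x. f x y) ` S \<inter> W \<noteq> {}"
    using lyq[unfolded lower_Y_quasicont_at_def, rule_format,
        OF nhd_open[OF assms(2,3)] nhd_open[OF assms(1,5)] nhd_open[OF assms(4,6)]]
    by blast
  obtain y1 where y1: "y1 \<in> N" "y1 \<in> D" using dense_in_meets_open[OF D(1) N] .
  then obtain x1 where "x1 \<in> S" "f x1 y1 \<in> W" using hits by blast
  then show ?thesis using y1 N(3) D(2) by blast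
qed

theorem proposition2p3:
  fixes f :: "'a::topological_space \<Rightarrow> 'b::topological_space \<Rightarrow> 'c::topological_space"
    and V :: "'b set"
  assumes "open V" and "V \<noteq> {}"
    and "((\<forall>x. \<forall>y\<in>V. vert_quasicont_at f x y) \<and>
          (\<forall>x. \<exists>D. dense_in D V \<and> (\<forall>y\<in>D. lower_X_quasicont_at f x y)))
       \<or> ((\<forall>x. \<forall>y\<in>V. lower_Y_quasicont_at f x y) \<and>
          (\<exists>D. dense_in D V \<and> (\<forall>x. \<forall>y\<in>D. lower_X_quasicont_at f x y)))"
  shows "lower_quasicont_sv (\<lambda>x. (\<lambda>y. f x y) ` V)"
proof (rule lower_quasicont_sv_image_if_approx[OF \<open>open V\<close>])
  fix x0 y0 S W
  assume pt: "open S" "x0 \<in> S" "open W" "y0 \<in> V" "f x0 y0 \<in> W"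
  from assms(3) show "\<exists>x1\<in>S. \<exists>y1\<in>V. f x1 y1 \<in> W \<and> lower_X_quasicont_at f x1 y1"
  proof
    assume "(\<forall>x. \<forall>y\<in>V. vert_quasicont_at f x y) \<and>
          (\<forall>x. \<exists>D. dense_in D V \<and> (\<forall>y\<in>D. lower_X_quasicont_at f x y))"
    then show ?thesis using approx_from_vert_quasicont[where f = f, OF \<open>open V\<close> pt] pt(4) by blast
  next
    assume "(\<forall>x. \<forall>y\<in>V. lower_Y_quasicont_at f x y) \<and>
          (\<exists>D. dense_in D V \<and> (\<forall>x. \<forall>y\<in>D. lower_X_quasicont_at f x y))"
    then obtain D where "\<forall>x. \<forall>y\<in>V. lower_Y_quasicont_at f x y" "dense_in D V"
        "\<And>x y. y \<in> D \<Longrightarrow> lower_X_quasicont_at f x y"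
      by blast
    then show ?thesis using approx_from_lower_Y_quasicont[where f = f, OF \<open>open V\<close> pt] pt(4) by blast
  qed
qed

end
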